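(* Let $-1<n<1$, $\delta=n+1$, and let $m$ be a minimizer for $f_L(n)$ that is not constant. Then $$\max_\Omega m\ge 1-\delta-2\sqrt{\delta}\sqrt{1-\delta/2}.$$
   Context: $\Omega$ is the flat torus $\mathbb R^d/(L\mathbb Z)^d$, $d\ge2$. $F(m)=\frac14(m^2-1)^2$, $\mathcal F(m)=\frac12\int_\Omega|\nabla m|^2dx+\int_\Omega F(m)dx$ for $m\in H^1(\Omega)$, and $f_L(n)=\inf\{\mathcal F(m):m\in H^1(\Omega),\ L^{-d}\int_\Omega m\,dx=n\}$; a minimizer is an admissible $m$ attaining the infimum (minimizers are smooth). *)

theory Defs
  imports "HOL-Analysis.Analysis"
begin

text \<open>The flat torus R^d/(L Z)^d is modelled by L-periodic functions on real^'d,
  integrated over the fundamental cell [0,L]^d.\<close>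

definition periodic :: "real \<Rightarrow> (real^'d::finite \<Rightarrow> 'a) \<Rightarrow> bool" where
  "periodic L f \<longleftrightarrow> (\<forall>x i. f (x + L *\<^sub>R axis i 1) = f x)"

definition cell :: "real \<Rightarrow> (real^'d::finite) set" where
  "cell L = cbox 0 (\<chi> i. L)"

definition test_fun :: "real \<Rightarrow> (real^'d::finite \<Rightarrow> real) \<Rightarrow> (real^'d \<Rightarrow> real^'d) \<Rightarrow> bool" where
  "test_fun L \<phi> D\<phi> \<longleftrightarrow> periodic L \<phi> \<and>
     (\<forall>x. (\<phi> has_derivative (\<lambda>h. D\<phi> x \<bullet> h)) (at x)) \<and> continuous_on UNIV D\<phi>"

definition weak_grad :: "real \<Rightarrow> (real^'d::finite \<Rightarrow> real) \<Rightarrow> (real^'d \<Rightarrow> real^'d) \<Rightarrow> bool" where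
  "weak_grad L m G \<longleftrightarrow>
     G \<in> borel_measurable (lebesgue_on (cell L)) \<and>
     integrable (lebesgue_on (cell L)) (\<lambda>x. (norm (G x))^2) \<and>
     (\<forall>\<phi> D\<phi>. test_fun L \<phi> D\<phi> \<longrightarrow>
        (\<forall>i. (\<integral>x. m x * (D\<phi> x $ i) \<partial>lebesgue_on (cell L))
             = - (\<integral>x. (G x $ i) * \<phi> x \<partial>lebesgue_on (cell L))))"

definition H1 :: "real \<Rightarrow> (real^'d::finite \<Rightarrow> real) \<Rightarrow> bool" where
  "H1 L m \<longleftrightarrow> periodic L m \<and> m \<in> borel_measurable (lebesgue_on (cell L)) \<and>
     integrable (lebesgue_on (cell L)) (\<lambda>x. (m x)^2) \<and> (\<exists>G. weak_grad L m G)"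

definition Fdw :: "real \<Rightarrow> real" where
  "Fdw u = (1/4) * (u^2 - 1)^2"

text \<open>Energy (in [0,\<infinity>]); the weak gradient is unique a.e., so the INF is over equal values.\<close>
definition energy :: "real \<Rightarrow> (real^'d::finite \<Rightarrow> real) \<Rightarrow> ennreal" where
  "energy L m = (INF G \<in> {G. weak_grad L m G}.
      \<integral>\<^sup>+x. ennreal ((1/2) * (norm (G x))^2 + Fdw (m x)) \<partial>lebesgue_on (cell L))"

definition admissible :: "real \<Rightarrow> real \<Rightarrow> (real^'d::finite \<Rightarrow> real) \<Rightarrow> bool" where
  "admissible L n m \<longleftrightarrow> H1 L m \<and>
     (\<integral>x. m x \<partial>lebesgue_on (cell L)) / L ^ CARD('d) = n"

definition fL :: "'d::finite itself \<Rightarrow> real \<Rightarrow> real \<Rightarrow> ennreal" where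
  "fL TYPE('d) L n = (INF m \<in> {m :: real^'d \<Rightarrow> real. admissible L n m}. energy L m)"

definition minimizer :: "real \<Rightarrow> real \<Rightarrow> (real^'d::finite \<Rightarrow> real) \<Rightarrow> bool" where
  "minimizer L n m \<longleftrightarrow> admissible L n m \<and> energy L m = fL TYPE('d) L n"

end

theory Submission
  imports Defs
begin

text \<open>The threshold equals \<open>-n - sqrt (2 (1 - n\<^sup>2))\<close>, and
  \<open>F y - F n - F' n (y - n) = (y - n)\<^sup>2 ((y + n)\<^sup>2 - 2 (1 - n\<^sup>2)) / 4\<close>, so below the threshold
  the double well lies strictly above its tangent at the mean value \<open>n\<close>. If a minimizer \<open>m\<close>
  stayed below the threshold, integrating this over the cell (the linear term integrates
  to zero because \<open>m\<close> has mean \<open>n\<close>) would give \<open>\<integral>F(m) \<ge> L\<^sup>d F n\<close>, with equality only for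
  \<open>m = n\<close>. But \<open>\<integral>F(m) \<le> \<F>(m) \<le> \<F>(n) = L\<^sup>d F n\<close> since the constant \<open>n\<close> is admissible,
  so \<open>m\<close> would be constant. Admissibility of constants needs that the integral of a partial
  derivative of a periodic function over the cell vanishes, which follows from the
  translation invariance of such integrals.\<close>

subsection \<open>Integrals over the cell\<close>

lemma
  fixes f :: "real^'d::finite \<Rightarrow> real"
  assumes "continuous_on (cell L) f"
  shows integrable_cell_continuous: "integrable (lebesgue_on (cell L)) f"
    and lebesgue_integral_cell_continuous: "(\<integral>x. f x \<partial>lebesgue_on (cell L)) = integral (cell L) f"
  using assms continuous_imp_integrable[of 0 "\<chi> i. L" f] lebesgue_integral_eq_integral[of "cell L" f]
  by (auto simp: cell_def intro: fmeasurableD)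

lemma content_cell:
  assumes "L > 0"
  shows "measure lborel (cell L :: (real^'d::finite) set) = L ^ CARD('d)"
proof -
  have "(0::real^'d) \<in> cell L"
    using assms unfolding cell_def by (simp add: mem_box_cart)
  then have "cell L \<noteq> ({} :: (real^'d) set)" by blast
  then show ?thesis unfolding cell_def by (simp add: content_cbox_cart)
qed

lemma box_cell_nonempty:
  assumes "L > 0"
  shows "box 0 (\<chi> i. L :: real^'d::finite) \<noteq> {}"
proof -
  have "(\<chi> i. L / 2) \<in> box 0 (\<chi> i. L :: real^'d)" using assms by (simp add: mem_box_cart)
  then show ?thesis by blast
qed

lemma continuous_on_cell_le_SUP:
  fixes m :: "real^'d::finite \<Rightarrow> real"
  assumes "continuous_on (cell L) m" "x \<in> cell L"
  shows "m x \<le> (SUP y \<in> cell L. m y)"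
proof -
  have "bdd_above (m ` cell L)"
    using compact_continuous_image[OF assms(1)]
    by (simp add: cell_def bounded_imp_bdd_above compact_imp_bounded)
  then show ?thesis using cSUP_upper[OF assms(2)] by blast
qed

lemma integral_cell_const:
  assumes "L > 0"
  shows "integral (cell L :: (real^'d::finite) set) (\<lambda>_. c) = L ^ CARD('d) * c"
  using content_cell[OF assms, where 'd='d] by (simp add: cell_def)

lemma lebesgue_integral_cell_const:
  assumes "L > 0"
  shows "(\<integral>x. c \<partial>lebesgue_on (cell L :: (real^'d::finite) set)) = L ^ CARD('d) * c"
proof -
  have "(\<integral>x. c \<partial>lebesgue_on (cell L :: (real^'d) set)) = integral (cell L :: (real^'d) set) (\<lambda>_. c)"
    by (rule lebesgue_integral_cell_continuous) simp
  then show ?thesis using integral_cell_const[OF assms] by simp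
qed

subsection \<open>Periodic functions on the cell\<close>

lemma periodic_shift_int:
  assumes "periodic L f"
  shows "f (x + (of_int k * L) *\<^sub>R axis i 1) = f x"
proof -
  have shift_nat: "f (z + (real n * L) *\<^sub>R axis i 1) = f z" for n z
  proof (induction n arbitrary: z)
    case (Suc n)
    have "f (z + (real (Suc n) * L) *\<^sub>R axis i 1) = f ((z + (real n * L) *\<^sub>R axis i 1) + L *\<^sub>R axis i 1)"
      by (simp add: algebra_simps)
    also have "\<dots> = f z" using assms Suc unfolding periodic_def by simp
    finally show ?case .
  qed simp
  show ?thesis
  proof (cases "k \<ge> 0")
    case True
    then show ?thesis using shift_nat[of x "nat k"] by simp
  next
    case False
    have "f x = f ((x + (of_int k * L) *\<^sub>R axis i 1) + (real (nat (-k)) * L) *\<^sub>R axis i 1)"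
      using False by (simp add: algebra_simps)
    then show ?thesis using shift_nat by simp
  qed
qed

lemma periodic_range_eq_image_cell:
  fixes f :: "real^'d::finite \<Rightarrow> 'a"
  assumes per: "periodic L f" and L: "L > 0"
  shows "range f = f ` cell L"
proof
  show "range f \<subseteq> f ` cell L"
  proof
    fix z assume "z \<in> range f"
    then obtain x where z: "z = f x" by blast
    define k where "k j = \<lfloor>x $ j / L\<rfloor>" for j
    define y where "y = x - (\<Sum>j\<in>UNIV. (of_int (k j) * L) *\<^sub>R axis j 1)"
    have shift_sum: "f (w + (\<Sum>j\<in>S. (of_int (k j) * L) *\<^sub>R axis j 1)) = f w" if "finite S" for w S
      using that
    proof (induction S arbitrary: w rule: finite_induct)
      case (insert a S)
      have "f (w + (\<Sum>j\<in>insert a S. (of_int (k j) * L) *\<^sub>R axis j 1))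
          = f ((w + (\<Sum>j\<in>S. (of_int (k j) * L) *\<^sub>R axis j 1)) + (of_int (k a) * L) *\<^sub>R axis a 1)"
        using insert by (simp add: algebra_simps)
      also have "\<dots> = f w" using periodic_shift_int[OF per] insert by simp
      finally show ?case .
    qed simp
    have "y \<in> cell L"
    proof -
      have "0 \<le> y $ j \<and> y $ j \<le> L" for j
      proof -
        have yj: "y $ j = x $ j - of_int (k j) * L"
          by (simp add: y_def axis_def if_distrib cong: if_cong)
        have "of_int (k j) \<le> x $ j / L" "x $ j / L < of_int (k j) + 1"
          unfolding k_def by linarith+
        with L show ?thesis unfolding yj by (simp add: field_simps)
      qed
      then show ?thesis unfolding cell_def by (simp add: mem_box_cart)
    qed
    moreover have "f y = f x" using shift_sum[of UNIV y] by (simp add: y_def)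
    ultimately show "z \<in> f ` cell L" using z by (metis image_eqI)
  qed
qed auto

lemma integral_cell_shift_axis_le:
  fixes \<phi> :: "real^'d::finite \<Rightarrow> real"
  assumes cont: "continuous_on UNIV \<phi>" and per: "\<And>x. \<phi> (x + L *\<^sub>R axis i 1) = \<phi> x"
    and h: "0 \<le> h" "h \<le> L"
  shows "integral (cell L) (\<lambda>x. \<phi> (x + h *\<^sub>R axis i 1)) = integral (cell L) \<phi>"
proof -
  define e :: "real^'d" where "e = axis i 1"
  have ie: "\<And>x. x \<bullet> e = x $ i" by (simp add: e_def inner_axis)
  have eB: "e \<in> Basis" by (simp add: e_def Basis_vec_def) (metis)
  have intg: "\<And>a b. \<phi> integrable_on cbox a b"
    by (rule integrable_continuous) (use cont continuous_on_subset in blast)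
  define A1 :: "(real^'d) set" where "A1 = cbox 0 (\<chi> j. if j = i then h else L)"
  define A2 :: "(real^'d) set" where "A2 = cbox (\<chi> j. if j = i then h else 0) (\<chi> j. L)"
  define A3 :: "(real^'d) set" where "A3 = cbox (\<chi> j. if j = i then L else 0) (\<chi> j. if j = i then L + h else L)"
  \<comment> \<open>The shifted cell is \<open>A2 \<union> A3\<close>, the cell is \<open>A1 \<union> A2\<close>, and \<open>A3\<close> is \<open>A1\<close> shifted by one period.\<close>
  have "integral (cbox (h *\<^sub>R e - h *\<^sub>R e) ((\<chi> j. L) + h *\<^sub>R e - h *\<^sub>R e)) (\<lambda>x. \<phi> (x + h *\<^sub>R e))
      = integral (cbox (h *\<^sub>R e) ((\<chi> j. L) + h *\<^sub>R e)) \<phi>"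
    by (rule integral_shift_cbox)
  then have shifted: "integral (cell L) (\<lambda>x. \<phi> (x + h *\<^sub>R e)) = integral (cbox (h *\<^sub>R e) ((\<chi> j. L) + h *\<^sub>R e)) \<phi>"
    by (simp add: cell_def)
  have c1: "cbox 0 (\<chi> j. L) \<inter> {x. x \<bullet> e \<le> h} = A1"
    using h unfolding A1_def ie by (auto simp: mem_box_cart split: if_splits; smt (verit))
  have c2: "cbox 0 (\<chi> j. L) \<inter> {x. x \<bullet> e \<ge> h} = A2"
    using h unfolding A2_def ie by (auto simp: mem_box_cart split: if_splits; smt (verit))
  have c3: "cbox (h *\<^sub>R e) ((\<chi> j. L) + h *\<^sub>R e) \<inter> {x. x \<bullet> e \<le> L} = A2"
    using h unfolding A2_def ie by (auto simp: mem_box_cart e_def axis_def split: if_splits; smt (verit))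
  have c4: "cbox (h *\<^sub>R e) ((\<chi> j. L) + h *\<^sub>R e) \<inter> {x. x \<bullet> e \<ge> L} = A3"
    using h unfolding A3_def ie by (auto simp: mem_box_cart e_def axis_def split: if_splits; smt (verit))
  have split_cell: "integral (cell L) \<phi> = integral A1 \<phi> + integral A2 \<phi>"
    using integral_split[OF intg eB, of 0 "\<chi> j. L" h] c1 c2 by (simp add: cell_def)
  have split_shifted: "integral (cbox (h *\<^sub>R e) ((\<chi> j. L) + h *\<^sub>R e)) \<phi> = integral A2 \<phi> + integral A3 \<phi>"
    using integral_split[OF intg eB, of "h *\<^sub>R e" "(\<chi> j. L) + h *\<^sub>R e" L] c3 c4 by simp
  have A3_shift: "A3 = cbox (0 + L *\<^sub>R e) ((\<chi> j. if j = i then h else L) + L *\<^sub>R e)"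
    unfolding A3_def by (rule arg_cong2[where f=cbox]) (auto simp: vec_eq_iff e_def axis_def)
  have "integral A3 \<phi> = integral A1 (\<lambda>x. \<phi> (x + L *\<^sub>R e))"
    unfolding A3_shift A1_def
    using integral_shift_cbox[of "0 + L *\<^sub>R e" "L *\<^sub>R e" "(\<chi> j. if j = i then h else L) + L *\<^sub>R e" \<phi>]
    by simp
  also have "\<dots> = integral A1 \<phi>" using per by (simp add: e_def)
  finally show ?thesis using shifted split_cell split_shifted by (simp add: e_def)
qed

lemma integral_cell_shift_axis:
  fixes \<phi> :: "real^'d::finite \<Rightarrow> real"
  assumes per: "periodic L \<phi>" and cont: "continuous_on UNIV \<phi>" and L: "L > 0"
  shows "integral (cell L) (\<lambda>x. \<phi> (x + h *\<^sub>R axis i 1)) = integral (cell L) \<phi>"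
proof -
  define r where "r = h - of_int \<lfloor>h / L\<rfloor> * L"
  have r: "0 \<le> r" "r \<le> L"
    using L floor_divide_lower[OF L, of h] floor_divide_upper[OF L, of h]
    by (auto simp: r_def algebra_simps)
  have "\<phi> (x + h *\<^sub>R axis i 1) = \<phi> (x + r *\<^sub>R axis i 1)" for x
    using periodic_shift_int[OF per, of "x + r *\<^sub>R axis i 1" "\<lfloor>h / L\<rfloor>" i]
    by (simp add: r_def algebra_simps)
  then have "integral (cell L) (\<lambda>x. \<phi> (x + h *\<^sub>R axis i 1)) = integral (cell L) (\<lambda>x. \<phi> (x + r *\<^sub>R axis i 1))"
    by simp
  also have "\<dots> = integral (cell L) \<phi>"
    using per unfolding periodic_def by (intro integral_cell_shift_axis_le[OF cont _ r]) blast
  finally show ?thesis .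
qed

lemma integral_cell_partial_derivative:
  fixes \<phi> :: "real^'d::finite \<Rightarrow> real"
  assumes test: "test_fun L \<phi> D\<phi>" and L: "L > 0"
  shows "integral (cell L) (\<lambda>x. D\<phi> x $ i) = 0"
proof -
  define e :: "real^'d" where "e = axis i 1"
  have per: "periodic L \<phi>" and der: "\<And>x. (\<phi> has_derivative (\<lambda>h. D\<phi> x \<bullet> h)) (at x)"
    and cD: "continuous_on UNIV D\<phi>"
    using test unfolding test_fun_def by auto
  have cont: "continuous_on UNIV \<phi>"
    using der by (meson continuous_on_eq_continuous_within has_derivative_continuous)
  have partial: "((\<lambda>t. \<phi> (x + t *\<^sub>R e)) has_field_derivative D\<phi> (x + t *\<^sub>R e) $ i) (at t within UNIV)"
    for x t
  proof -
    have "((\<lambda>t. x + t *\<^sub>R e) has_derivative (\<lambda>s. s *\<^sub>R e)) (at t)"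
      by (auto intro!: derivative_eq_intros)
    from has_derivative_compose[OF this der]
    have "((\<lambda>t. \<phi> (x + t *\<^sub>R e)) has_derivative (\<lambda>s. D\<phi> (x + t *\<^sub>R e) \<bullet> (s *\<^sub>R e))) (at t)"
      by (simp add: o_def)
    moreover have "(\<lambda>s. D\<phi> (x + t *\<^sub>R e) \<bullet> (s *\<^sub>R e)) = (*) (D\<phi> (x + t *\<^sub>R e) $ i)"
      by (auto simp: e_def inner_axis)
    ultimately show ?thesis by (simp add: has_field_derivative_def)
  qed
  have partial_cont: "continuous_on (UNIV \<times> cell L) (\<lambda>(t, x). D\<phi> (x + t *\<^sub>R e) $ i)"
  proof -
    have "continuous_on (UNIV \<times> cell L) (\<lambda>p. D\<phi> (snd p + fst p *\<^sub>R e))"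
      by (rule continuous_on_compose2[OF cD]) (auto intro!: continuous_intros)
    then show ?thesis by (simp add: split_beta continuous_on_component)
  qed
  have shift_integrable: "(\<lambda>x. \<phi> (x + t *\<^sub>R e)) integrable_on cell L" for t
    unfolding cell_def
    by (rule integrable_continuous, rule continuous_on_compose2[OF cont]) (auto intro!: continuous_intros)
  have "((\<lambda>t. integral (cell L) (\<lambda>x. \<phi> (x + t *\<^sub>R e)))
          has_field_derivative integral (cell L) (\<lambda>x. D\<phi> (x + 0 *\<^sub>R e) $ i)) (at 0 within UNIV)"
    unfolding cell_def
    by (rule leibniz_rule_field_derivative[where fx="\<lambda>t x. D\<phi> (x + t *\<^sub>R e) $ i",
        OF partial shift_integrable[unfolded cell_def] partial_cont[unfolded cell_def]]) auto
  moreover have "(\<lambda>t. integral (cell L) (\<lambda>x. \<phi> (x + t *\<^sub>R e))) = (\<lambda>_. integral (cell L) \<phi>)"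
    using integral_cell_shift_axis[OF per cont L] by (simp add: e_def)
  ultimately have "((\<lambda>_. integral (cell L) \<phi>) has_field_derivative integral (cell L) (\<lambda>x. D\<phi> x $ i)) (at 0)"
    by simp
  then show ?thesis using DERIV_const DERIV_unique by blast
qed

subsection \<open>Comparison with the constant state\<close>

lemma weak_grad_const:
  assumes "L > 0"
  shows "weak_grad L (\<lambda>_::real^'d::finite. c) (\<lambda>_. 0)"
  unfolding weak_grad_def
proof (intro conjI allI impI)
  fix \<phi> :: "real^'d \<Rightarrow> real" and D\<phi> :: "real^'d \<Rightarrow> real^'d" and i :: 'd
  assume test: "test_fun L \<phi> D\<phi>"
  have "continuous_on (cell L) (\<lambda>x. D\<phi> x $ i)"
    using test unfolding test_fun_def
    by (intro continuous_on_component) (auto intro: continuous_on_subset)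
  then have "(\<integral>x. D\<phi> x $ i \<partial>lebesgue_on (cell L)) = 0"
    using lebesgue_integral_cell_continuous integral_cell_partial_derivative[OF test assms] by metis
  then show "(\<integral>x. c * (D\<phi> x $ i) \<partial>lebesgue_on (cell L))
      = - (\<integral>x. ((0::real^'d) $ i) * \<phi> x \<partial>lebesgue_on (cell L))"
    by simp
qed auto

lemma admissible_const:
  assumes "L > 0"
  shows "admissible L c (\<lambda>_::real^'d::finite. c)"
  unfolding admissible_def H1_def periodic_def
proof (intro conjI allI)
  show "(\<integral>x. c \<partial>lebesgue_on (cell L :: (real^'d) set)) / L ^ CARD('d) = c"
    using assms by (subst lebesgue_integral_cell_const[OF assms]) simp
  show "integrable (lebesgue_on (cell L)) (\<lambda>x::real^'d. c\<^sup>2)"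
    by (rule integrable_cell_continuous) simp
qed (use weak_grad_const[OF assms, of c] in auto)

lemma energy_const_le:
  assumes "L > 0"
  shows "energy L (\<lambda>_::real^'d::finite. c) \<le> ennreal (L ^ CARD('d) * Fdw c)"
proof -
  have "energy L (\<lambda>_::real^'d. c)
      \<le> (\<integral>\<^sup>+x. ennreal ((1/2) * (norm ((\<lambda>_::real^'d. 0::real^'d) x))\<^sup>2 + Fdw c) \<partial>lebesgue_on (cell L))"
    unfolding energy_def by (rule INF_lower) (use weak_grad_const[OF assms] in auto)
  also have "\<dots> = (\<integral>\<^sup>+x. ennreal (Fdw c) \<partial>lebesgue_on (cell L :: (real^'d) set))"
    by simp
  also have "\<dots> = ennreal (\<integral>x. Fdw c \<partial>lebesgue_on (cell L :: (real^'d) set))"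
    by (rule nn_integral_eq_integral)
       (use integrable_cell_continuous[of L "\<lambda>_. Fdw c"] in \<open>auto simp: Fdw_def\<close>)
  also have "\<dots> = ennreal (L ^ CARD('d) * Fdw c)"
    by (rule arg_cong[OF lebesgue_integral_cell_const[OF assms]])
  finally show ?thesis .
qed

lemma integral_Fdw_le_energy:
  fixes m :: "real^'d::finite \<Rightarrow> real"
  assumes "continuous_on (cell L) m"
  shows "ennreal (integral (cell L) (\<lambda>x. Fdw (m x))) \<le> energy L m"
proof -
  have cF: "continuous_on (cell L) (\<lambda>x. Fdw (m x))"
    unfolding Fdw_def by (intro continuous_intros assms)
  have "ennreal (integral (cell L) (\<lambda>x. Fdw (m x))) = (\<integral>\<^sup>+x. ennreal (Fdw (m x)) \<partial>lebesgue_on (cell L))"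
    using nn_integral_eq_integral[OF integrable_cell_continuous[OF cF]]
      lebesgue_integral_cell_continuous[OF cF]
    by (simp add: Fdw_def)
  also have "\<dots> \<le> energy L m"
    unfolding energy_def by (intro INF_greatest nn_integral_mono ennreal_leI) simp
  finally show ?thesis .
qed

lemma minimizer_integral_Fdw_le:
  fixes m :: "real^'d::finite \<Rightarrow> real"
  assumes "minimizer L n m" "continuous_on (cell L) m" "L > 0"
  shows "integral (cell L) (\<lambda>x. Fdw (m x)) \<le> L ^ CARD('d) * Fdw n"
proof -
  have "ennreal (integral (cell L) (\<lambda>x. Fdw (m x))) \<le> fL TYPE('d) L n"
    using integral_Fdw_le_energy[OF assms(2)] assms(1) by (simp add: minimizer_def)
  also have "\<dots> \<le> energy L (\<lambda>_::real^'d. n)"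
    unfolding fL_def by (rule INF_lower) (simp add: admissible_const[OF assms(3)])
  also have "\<dots> \<le> ennreal (L ^ CARD('d) * Fdw n)"
    by (rule energy_const_le[OF assms(3)])
  finally show ?thesis
    using assms(3) by (subst (asm) ennreal_le_iff) (auto simp: Fdw_def)
qed

lemma admissible_integral_cell:
  fixes m :: "real^'d::finite \<Rightarrow> real"
  assumes "admissible L n m" "continuous_on (cell L) m" "L > 0"
  shows "integral (cell L) m = L ^ CARD('d) * n"
  using assms lebesgue_integral_cell_continuous[OF assms(2)]
  by (simp add: admissible_def divide_eq_eq)

subsection \<open>The double well above its tangent\<close>

lemma Fdw_minus_tangent:
  "Fdw y - Fdw n - (n^3 - n) * (y - n) = 1/4 * (y - n)\<^sup>2 * ((y + n)\<^sup>2 - 2 * (1 - n\<^sup>2))"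
  unfolding Fdw_def by (simp add: power2_eq_square power3_eq_cube field_simps)

lemma Fdw_above_tangent:
  fixes y n :: real
  assumes "-1 < n" "n < 1" "y < 1 - (n + 1) - 2 * sqrt (n + 1) * sqrt (1 - (n + 1) / 2)" "y \<noteq> n"
  shows "Fdw n + (n^3 - n) * (y - n) < Fdw y"
proof -
  define t where "t = sqrt (2 * (1 - n\<^sup>2))"
  have "2 * (1 - n\<^sup>2) = 2\<^sup>2 * ((n + 1) * (1 - (n + 1) / 2))"
    by (simp add: power2_eq_square field_simps)
  then have "t = 2 * (sqrt (n + 1) * sqrt (1 - (n + 1) / 2))"
    unfolding t_def by (simp add: real_sqrt_mult)
  with assms(3) have "t < - (y + n)" by linarith
  moreover have "0 \<le> t" and t2: "t\<^sup>2 = 2 * (1 - n\<^sup>2)"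
    using assms(1,2) by (auto simp: t_def abs_square_le_1 less_imp_le)
  ultimately have "t\<^sup>2 < (y + n)\<^sup>2"
    using power_strict_mono[of t "- (y + n)" 2, unfolded power2_minus] by simp
  then have "0 < 1/4 * (y - n)\<^sup>2 * ((y + n)\<^sup>2 - 2 * (1 - n\<^sup>2))"
    using t2 assms(4) by simp
  then show ?thesis using Fdw_minus_tangent[of y n] by linarith
qed

lemma cbox_const_if_above_tangent:
  fixes m :: "'a::euclidean_space \<Rightarrow> real"
  assumes ne: "box a b \<noteq> {}"
    and cm: "continuous_on (cbox a b) m" and cF: "continuous_on (cbox a b) (\<lambda>x. F (m x))"
    and mean: "integral (cbox a b) m = measure lborel (cbox a b) * n"
    and Jensen_le: "integral (cbox a b) (\<lambda>x. F (m x)) \<le> measure lborel (cbox a b) * F n"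
    and above: "\<And>x. x \<in> cbox a b \<Longrightarrow> m x \<noteq> n \<Longrightarrow> F n + s * (m x - n) < F (m x)"
    and x: "x \<in> cbox a b"
  shows "m x = n"
proof -
  define g where "g x = F (m x) - F n - s * (m x - n)" for x
  have g_nonneg: "0 \<le> g x" if "x \<in> cbox a b" for x
    using above[OF that] by (cases "m x = n") (auto simp: g_def)
  have "(m has_integral measure lborel (cbox a b) * n) (cbox a b)"
    using mean integrable_continuous[OF cm] by (metis integrable_integral)
  moreover have "((\<lambda>x. F (m x)) has_integral integral (cbox a b) (\<lambda>x. F (m x))) (cbox a b)"
    using integrable_continuous[OF cF] by (rule integrable_integral)
  ultimately have "(g has_integral (integral (cbox a b) (\<lambda>x. F (m x)) - measure lborel (cbox a b) * F n
      - s * (measure lborel (cbox a b) * n - measure lborel (cbox a b) * n))) (cbox a b)"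
    unfolding g_def
    by (intro has_integral_diff has_integral_mult_right)
       (auto intro: has_integral_eq_rhs[OF has_integral_const])
  then have hg: "(g has_integral integral (cbox a b) (\<lambda>x. F (m x)) - measure lborel (cbox a b) * F n) (cbox a b)"
    by simp
  have "0 \<le> integral (cbox a b) (\<lambda>x. F (m x)) - measure lborel (cbox a b) * F n"
    by (rule has_integral_nonneg[OF hg g_nonneg])
  with Jensen_le hg have "(g has_integral 0) (cbox a b)"
    by simp
  moreover have "continuous_on (cbox a b) g"
    unfolding g_def by (intro continuous_intros cm cF)
  ultimately have "g x = 0"
    using has_integral_0_cbox_imp_0[OF _ _ _ ne x] g_nonneg box_subset_cbox by blast
  then show ?thesis using above[OF x] by (auto simp: g_def)
qed

theorem lemma3p2:
  fixes L n :: real and m :: "real^'d::finite \<Rightarrow> real"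
  assumes "CARD('d) \<ge> 2" and "L > 0"
    and "-1 < n" and "n < 1"
    and "minimizer L n m"
    and "continuous_on UNIV m"
    and "\<exists>x y. m x \<noteq> m y"
  shows "(SUP x \<in> cell L. m x) \<ge> 1 - (n + 1) - 2 * sqrt (n + 1) * sqrt (1 - (n + 1) / 2)"
proof (rule ccontr)
  assume below: "\<not> ?thesis"
  have cm: "continuous_on (cell L) m" using assms(6) continuous_on_subset by blast
  then have cF: "continuous_on (cell L) (\<lambda>x. Fdw (m x))"
    unfolding Fdw_def by (intro continuous_intros)
  have above: "Fdw n + (n^3 - n) * (m y - n) < Fdw (m y)" if "y \<in> cell L" "m y \<noteq> n" for y
    using below continuous_on_cell_le_SUP[OF cm that(1)]
    by (intro Fdw_above_tangent[OF assms(3,4) _ that(2)]) linarith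
  have "admissible L n m" using assms(5) by (simp add: minimizer_def)
  then have mean: "integral (cell L) m = measure lborel (cell L :: (real^'d) set) * n"
    using admissible_integral_cell[OF _ cm assms(2)] content_cell[OF assms(2), where 'd='d] by simp
  have Jensen_le: "integral (cell L) (\<lambda>x. Fdw (m x)) \<le> measure lborel (cell L :: (real^'d) set) * Fdw n"
    using minimizer_integral_Fdw_le[OF assms(5) cm assms(2)] content_cell[OF assms(2), where 'd='d] by simp
  have "m x = n" if "x \<in> cell L" for x
  proof (rule cbox_const_if_above_tangent[where s="n^3 - n", OF box_cell_nonempty[OF assms(2)]
        cm[unfolded cell_def] cF[unfolded cell_def] mean[unfolded cell_def] Jensen_le[unfolded cell_def]])
    show "Fdw n + (n^3 - n) * (m y - n) < Fdw (m y)" if "y \<in> cbox 0 (\<chi> i. L)" "m y \<noteq> n" for y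
      using above that by (simp add: cell_def)
    show "x \<in> cbox 0 (\<chi> i. L)" using \<open>x \<in> cell L\<close> by (simp add: cell_def)
  qed
  moreover have "periodic L m"
    using assms(5) unfolding minimizer_def admissible_def H1_def by (elim conjE)
  ultimately have "range m \<subseteq> {n}"
    by (simp add: periodic_range_eq_image_cell[OF _ assms(2)] image_subset_iff)
  with assms(7) show False by (auto simp: image_subset_iff)
qed

end
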